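(* Let $B_n$ be the group of signed permutations of $\{\pm1,\ldots,\pm n\}$. For $\pi\in B_n$ set $\pi(0)=0$, $\mathrm{des}(\pi)=\#\{0\le i<n : \pi(i)>\pi(i+1)\}$ and $\mathrm{ides}(\pi)=\mathrm{des}(\pi^{-1})$. For $\pi$ uniformly random in $B_n$ let $X_{\mathrm{des}}=\mathrm{des}(\pi)$ and $X_{\mathrm{des}+\mathrm{ides}}=\mathrm{des}(\pi)+\mathrm{ides}(\pi)$. Then \[ \mathbb{E}(X_{\mathrm{des}+\mathrm{ides}})=n,\qquad \mathbb{V}(X_{\mathrm{des}+\mathrm{ides}}) = 2\,\mathbb{V}(X_{\mathrm{des}}) + \frac12. \]
   Context: A signed permutation is a bijection $\pi$ of $\{\pm1,\ldots,\pm n\}$ with $\pi(-i)=-\pi(i)$, written $[\pi(1),\ldots,\pi(n)]$; the convention $\pi(0)=0$ is applied to both $\pi$ and $\pi^{-1}$. *)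

theory Defs
  imports "HOL-Probability.Probability"
begin

text \<open>Signed permutations of {+-1,...,+-n}, represented as bijections of int that are odd
  (pi(-i) = -pi(i), hence pi(0) = 0) and fix every integer outside [-n, n].\<close>
definition signed_perms :: "nat \<Rightarrow> (int \<Rightarrow> int) set" where
  "signed_perms n = {\<pi>. bij \<pi> \<and> (\<forall>i. \<pi> (- i) = - \<pi> i) \<and> (\<forall>i. i \<notin> {- int n..int n} \<longrightarrow> \<pi> i = i)}"

text \<open>Descents, with the convention pi(0) = 0 (automatic from oddness).\<close>
definition des :: "nat \<Rightarrow> (int \<Rightarrow> int) \<Rightarrow> nat" where
  "des n \<pi> = card {i \<in> {0..<int n}. \<pi> i > \<pi> (i + 1)}"

definition ides :: "nat \<Rightarrow> (int \<Rightarrow> int) \<Rightarrow> nat" where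
  "ides n \<pi> = des n (inv \<pi>)"

end

theory Submission
  imports Defs
begin

text \<open>
  Right multiplication by a simple reflection \<open>s\<^sub>i\<close> (\<open>s\<^sub>0\<close> changes the sign of 1, \<open>s\<^sub>i\<close> for
  \<open>i > 0\<close> swaps \<open>\<plusminus>i\<close> with \<open>\<plusminus>(i + 1)\<close>) is a bijection of \<open>B\<^sub>n\<close> that toggles whether \<open>i\<close>
  is a descent of \<open>\<pi>\<close>. It toggles whether \<open>j\<close> is a descent of \<open>\<pi>\<^sup>-\<^sup>1\<close> exactly when \<open>\<pi>\<close> maps
  \<open>{i, i + 1}\<close> onto \<open>\<plusminus>{j, j + 1}\<close>, and on that event the two descents coincide. Pairing
  \<open>\<pi>\<close> with \<open>\<pi> s\<^sub>i\<close> therefore gives \<open>P(i \<in> Des \<pi>) = 1/2\<close> and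
  \<open>4 P(i \<in> Des \<pi>, j \<in> Des \<pi>\<^sup>-\<^sup>1) = 1 + P(\<pi>{i, i + 1} = \<plusminus>{j, j + 1})\<close>.
  Since values of \<open>\<pi>\<close> at two positions are uniformly distributed, the last probability is
  \<open>1/n\<close> for \<open>i = j = 0\<close>, \<open>1/(n(n - 1))\<close> for \<open>i, j \<ge> 1\<close> and zero otherwise, so these
  probabilities sum to 1. Hence \<open>E(des \<cdot> ides) = (n\<^sup>2 + 1)/4\<close>, i.e. the covariance of
  \<open>des\<close> and \<open>ides\<close> is \<open>1/4\<close>, while inversion shows that \<open>des\<close> and \<open>ides\<close> are
  equidistributed.
\<close>

section \<open>Signed permutations and simple reflections\<close>

lemma signed_perms_bij: "\<pi> \<in> signed_perms n \<Longrightarrow> bij \<pi>"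
  by (simp add: signed_perms_def)

lemma signed_perms_odd: "\<pi> \<in> signed_perms n \<Longrightarrow> \<pi> (- i) = - \<pi> i"
  by (simp add: signed_perms_def)

lemma signed_perms_fixes: "\<pi> \<in> signed_perms n \<Longrightarrow> i \<notin> {- int n..int n} \<Longrightarrow> \<pi> i = i"
  by (simp add: signed_perms_def)

lemma signed_perms_inj_eq: "\<pi> \<in> signed_perms n \<Longrightarrow> \<pi> x = \<pi> y \<longleftrightarrow> x = y"
  by (metis signed_perms_bij bij_is_inj inj_eq)

lemma signed_perms_zero: "\<pi> \<in> signed_perms n \<Longrightarrow> \<pi> 0 = 0"
  using signed_perms_odd[of \<pi> n 0] by simp

lemma signed_perms_eq_zero_iff: "\<pi> \<in> signed_perms n \<Longrightarrow> \<pi> x = 0 \<longleftrightarrow> x = 0"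
  by (metis signed_perms_inj_eq signed_perms_zero)

lemma signed_perms_abs_le:
  assumes "\<pi> \<in> signed_perms n" "\<bar>x\<bar> \<le> int n"
  shows "\<bar>\<pi> x\<bar> \<le> int n"
proof (rule ccontr)
  assume "\<not> \<bar>\<pi> x\<bar> \<le> int n"
  then have "\<pi> (\<pi> x) = \<pi> x"
    by (intro signed_perms_fixes[OF assms(1)]) auto
  then show False
    using \<open>\<not> \<bar>\<pi> x\<bar> \<le> int n\<close> assms signed_perms_inj_eq by metis
qed

lemma inv_signed_perm_eq_iff: "\<pi> \<in> signed_perms n \<Longrightarrow> inv \<pi> x = y \<longleftrightarrow> \<pi> y = x"
  by (metis signed_perms_bij bij_inv_eq_iff)

lemma inv_in_signed_perms:
  assumes "\<pi> \<in> signed_perms n"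
  shows "inv \<pi> \<in> signed_perms n"
proof -
  have "inv \<pi> (- i) = - inv \<pi> i" for i
    using signed_perms_odd[OF assms] inv_signed_perm_eq_iff[OF assms] by metis
  moreover have "inv \<pi> i = i" if "i \<notin> {- int n..int n}" for i
    using assms that inv_signed_perm_eq_iff signed_perms_fixes by blast
  ultimately show ?thesis
    using assms by (simp add: signed_perms_def bij_imp_bij_inv)
qed

lemma comp_in_signed_perms:
  "\<pi> \<in> signed_perms n \<Longrightarrow> \<sigma> \<in> signed_perms n \<Longrightarrow> \<pi> \<circ> \<sigma> \<in> signed_perms n"
  unfolding signed_perms_def by (auto intro: bij_comp)

lemma id_in_signed_perms: "id \<in> signed_perms n"
  unfolding signed_perms_def by auto

lemma finite_signed_perms: "finite (signed_perms n)"
proof -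
  let ?A = "{- int n..int n}"
  have "inj_on (\<lambda>\<pi>. restrict \<pi> ?A) (signed_perms n)"
    by (rule inj_onI) (metis restrict_apply' signed_perms_fixes ext)
  moreover have "(\<lambda>\<pi>. restrict \<pi> ?A) ` signed_perms n \<subseteq> PiE ?A (\<lambda>_. ?A)"
    using signed_perms_abs_le by (fastforce simp: abs_le_iff)
  ultimately show ?thesis
    by (meson finite_PiE finite_atLeastAtMost_int finite_imageD finite_subset)
qed

definition signed_transp :: "int \<Rightarrow> int \<Rightarrow> int \<Rightarrow> int" where
  "signed_transp a b x =
     (if x = a then b else if x = b then a else if x = - a then - b else if x = - b then - a else x)"

lemma signed_transp_involution: "a \<noteq> 0 \<Longrightarrow> b \<noteq> 0 \<Longrightarrow> signed_transp a b (signed_transp a b x) = x"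
  by (auto simp: signed_transp_def)

lemma signed_transp_in_signed_perms:
  assumes "a \<noteq> 0" "b \<noteq> 0" "\<bar>a\<bar> \<le> int n" "\<bar>b\<bar> \<le> int n"
  shows "signed_transp a b \<in> signed_perms n"
proof -
  have "bij (signed_transp a b)"
    by (metis assms(1,2) involuntory_imp_bij signed_transp_involution)
  then show ?thesis
    using assms unfolding signed_perms_def by (auto simp: signed_transp_def)
qed

definition simple_refl :: "int \<Rightarrow> int \<Rightarrow> int" where
  "simple_refl i = (if i = 0 then signed_transp 1 (- 1) else signed_transp i (i + 1))"

lemma simple_refl_involution: "0 \<le> i \<Longrightarrow> simple_refl i (simple_refl i x) = x"
  by (auto simp: simple_refl_def signed_transp_involution)

lemma simple_refl_in_signed_perms: "0 \<le> i \<Longrightarrow> i < int n \<Longrightarrow> simple_refl i \<in> signed_perms n"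
  by (auto simp: simple_refl_def intro!: signed_transp_in_signed_perms)

lemma inv_comp_simple_refl:
  assumes "\<pi> \<in> signed_perms n" "0 \<le> i" "i < int n"
  shows "inv (\<pi> \<circ> simple_refl i) = simple_refl i \<circ> inv \<pi>"
proof -
  have "inv (simple_refl i) = simple_refl i"
    by (rule inv_equality) (use simple_refl_involution[OF assms(2)] in auto)
  then show ?thesis
    using o_inv_distrib signed_perms_bij assms simple_refl_in_signed_perms by metis
qed

lemma simple_refl_less_iff:
  assumes "0 \<le> i" "x \<noteq> y" "x \<noteq> - y"
  shows "simple_refl i y < simple_refl i x \<longleftrightarrow>
    (y < x \<longleftrightarrow> \<not> ({x, y} = {i, i + 1} \<or> {x, y} = {- i, - (i + 1)}))"
proof (cases "i = 0")
  case True
  then show ?thesis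
    using assms unfolding simple_refl_def signed_transp_def doubleton_eq_iff by auto
next
  case False
  then show ?thesis
    using assms unfolding simple_refl_def signed_transp_def doubleton_eq_iff by auto
qed

definition adjacent_image :: "int \<Rightarrow> int \<Rightarrow> (int \<Rightarrow> int) \<Rightarrow> bool" where
  "adjacent_image i j \<pi> \<longleftrightarrow> {\<pi> i, \<pi> (i + 1)} = {j, j + 1} \<or> {\<pi> i, \<pi> (i + 1)} = {- j, - (j + 1)}"

lemma descent_comp_simple_refl:
  assumes "\<pi> \<in> signed_perms n" "0 \<le> i"
  shows "(\<pi> \<circ> simple_refl i) (i + 1) < (\<pi> \<circ> simple_refl i) i \<longleftrightarrow> \<not> \<pi> (i + 1) < \<pi> i"
proof (cases "i = 0")
  case True
  have "\<pi> 1 \<noteq> 0"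
    using signed_perms_eq_zero_iff[OF assms(1)] by simp
  then show ?thesis
    using True signed_perms_odd[OF assms(1), of 1] signed_perms_zero[OF assms(1)]
    by (auto simp: simple_refl_def signed_transp_def)
next
  case False
  have "\<pi> i \<noteq> \<pi> (i + 1)"
    using signed_perms_inj_eq[OF assms(1)] by simp
  then show ?thesis
    using False assms(2) by (auto simp: simple_refl_def signed_transp_def)
qed

lemma inv_descent_comp_simple_refl:
  assumes "\<pi> \<in> signed_perms n" "0 \<le> i" "i < int n"
  shows "inv (\<pi> \<circ> simple_refl i) (j + 1) < inv (\<pi> \<circ> simple_refl i) j \<longleftrightarrow>
    (inv \<pi> (j + 1) < inv \<pi> j \<longleftrightarrow> \<not> adjacent_image i j \<pi>)"
proof -
  note inv_eq = inv_signed_perm_eq_iff[OF assms(1)]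
  have preimage_iff: "{inv \<pi> j, inv \<pi> (j + 1)} = {a, b} \<longleftrightarrow> {\<pi> a, \<pi> b} = {j, j + 1}" for a b
    unfolding doubleton_eq_iff inv_eq by auto
  have "{inv \<pi> j, inv \<pi> (j + 1)} = {i, i + 1} \<or> {inv \<pi> j, inv \<pi> (j + 1)} = {- i, - (i + 1)}
      \<longleftrightarrow> adjacent_image i j \<pi>"
    unfolding preimage_iff
    unfolding adjacent_image_def signed_perms_odd[OF assms(1)] doubleton_eq_iff by auto
  moreover have "inv \<pi> j \<noteq> inv \<pi> (j + 1)" "inv \<pi> j \<noteq> - inv \<pi> (j + 1)"
    unfolding signed_perms_odd[OF inv_in_signed_perms[OF assms(1)], symmetric]
    by (simp_all add: signed_perms_inj_eq[OF inv_in_signed_perms[OF assms(1)]]) presburger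
  ultimately show ?thesis
    unfolding inv_comp_simple_refl[OF assms] o_apply
    using simple_refl_less_iff[OF assms(2)] by blast
qed

lemma adjacent_image_descent_iff:
  assumes "\<pi> \<in> signed_perms n" "adjacent_image i j \<pi>"
  shows "inv \<pi> (j + 1) < inv \<pi> j \<longleftrightarrow> \<pi> (i + 1) < \<pi> i"
proof -
  note inv_eq = inv_signed_perm_eq_iff[OF assms(1)]
  have inv_neg: "inv \<pi> x = - y" if "\<pi> y = - x" for x y
    using that inv_eq signed_perms_odd[OF assms(1)] by (metis minus_minus)
  show ?thesis
    using assms(2) unfolding adjacent_image_def doubleton_eq_iff
  proof (elim disjE conjE)
    assume "\<pi> i = j" "\<pi> (i + 1) = j + 1"
    then show ?thesis using inv_eq[of j i] inv_eq[of "j + 1" "i + 1"] by simp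
  next
    assume "\<pi> i = j + 1" "\<pi> (i + 1) = j"
    then show ?thesis using inv_eq[of j "i + 1"] inv_eq[of "j + 1" i] by simp
  next
    assume "\<pi> i = - j" "\<pi> (i + 1) = - (j + 1)"
    then show ?thesis using inv_neg[of i j] inv_neg[of "i + 1" "j + 1"] by simp
  next
    assume "\<pi> i = - (j + 1)" "\<pi> (i + 1) = - j"
    then show ?thesis using inv_neg[of "i + 1" j] inv_neg[of i "j + 1"] by simp
  qed
qed

lemma adjacent_image_comp_simple_refl:
  assumes "\<pi> \<in> signed_perms n" "0 \<le> i"
  shows "adjacent_image i j (\<pi> \<circ> simple_refl i) \<longleftrightarrow> adjacent_image i j \<pi>"
proof (cases "i = 0")
  case True
  have "(\<pi> \<circ> simple_refl i) i = \<pi> i" "(\<pi> \<circ> simple_refl i) (i + 1) = - \<pi> (i + 1)"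
    using True signed_perms_odd[OF assms(1), of 1] by (simp_all add: simple_refl_def signed_transp_def)
  then show ?thesis
    using True signed_perms_zero[OF assms(1)] unfolding adjacent_image_def doubleton_eq_iff by auto
next
  case False
  have "(\<pi> \<circ> simple_refl i) i = \<pi> (i + 1)" "(\<pi> \<circ> simple_refl i) (i + 1) = \<pi> i"
    using False by (simp_all add: simple_refl_def signed_transp_def)
  then show ?thesis
    unfolding adjacent_image_def by (simp add: insert_commute)
qed

section \<open>Counting with sign-reversing bijections\<close>

lemma sum_of_bool_flip:
  assumes "bij_betw \<sigma> S S" "\<And>x. x \<in> S \<Longrightarrow> A (\<sigma> x) \<longleftrightarrow> \<not> A x"
  shows "2 * (\<Sum>x\<in>S. of_bool (A x) :: real) = card S"
proof -
  have "(\<Sum>x\<in>S. of_bool (A x) :: real) = (\<Sum>x\<in>S. of_bool (A (\<sigma> x)))"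
    by (rule sum.reindex_bij_betw[OF assms(1), symmetric])
  moreover have "(\<Sum>x\<in>S. of_bool (A x) + of_bool (A (\<sigma> x)) :: real) = (\<Sum>x\<in>S. 1)"
    by (rule sum.cong) (use assms(2) in auto)
  ultimately show ?thesis
    by (simp add: sum.distrib)
qed

lemma sum_of_bool_conj_flip:
  assumes "bij_betw \<sigma> S S"
    and "\<And>x. x \<in> S \<Longrightarrow> A (\<sigma> x) \<longleftrightarrow> \<not> A x"
    and "\<And>x. x \<in> S \<Longrightarrow> B (\<sigma> x) \<longleftrightarrow> (B x \<longleftrightarrow> \<not> E x)"
    and "\<And>x. x \<in> S \<Longrightarrow> E x \<Longrightarrow> B x \<longleftrightarrow> A x"
    and "\<And>x. x \<in> S \<Longrightarrow> E (\<sigma> x) \<longleftrightarrow> E x"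
  shows "4 * (\<Sum>x\<in>S. of_bool (A x \<and> B x) :: real) = 2 * (\<Sum>x\<in>S. of_bool (B x)) + (\<Sum>x\<in>S. of_bool (E x))"
proof -
  have reindex: "(\<Sum>x\<in>S. f (\<sigma> x)) = sum f S" for f :: "_ \<Rightarrow> real"
    by (rule sum.reindex_bij_betw[OF assms(1)])
  have "(\<Sum>x\<in>S. of_bool (A x \<and> B x) + of_bool (A (\<sigma> x) \<and> B (\<sigma> x)) :: real)
      = (\<Sum>x\<in>S. of_bool (B x) + of_bool (E x \<and> \<not> B x))"
    by (rule sum.cong) (use assms(2-4) in auto)
  then have "2 * (\<Sum>x\<in>S. of_bool (A x \<and> B x) :: real)
      = (\<Sum>x\<in>S. of_bool (B x)) + (\<Sum>x\<in>S. of_bool (E x \<and> \<not> B x))"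
    by (simp add: sum.distrib reindex[of "\<lambda>x. of_bool (A x \<and> B x)"])
  moreover have "(\<Sum>x\<in>S. of_bool (E x \<and> \<not> B x) + of_bool (E (\<sigma> x) \<and> \<not> B (\<sigma> x)) :: real)
      = (\<Sum>x\<in>S. of_bool (E x))"
    by (rule sum.cong) (use assms(3,5) in auto)
  then have "2 * (\<Sum>x\<in>S. of_bool (E x \<and> \<not> B x) :: real) = (\<Sum>x\<in>S. of_bool (E x))"
    by (simp add: sum.distrib reindex[of "\<lambda>x. of_bool (E x \<and> \<not> B x)"])
  ultimately show ?thesis
    by linarith
qed

lemma des_eq_sum: "real (des n \<pi>) = (\<Sum>i\<in>{0..<int n}. of_bool (\<pi> (i + 1) < \<pi> i))"
proof -
  have "{i \<in> {0..<int n}. \<pi> i > \<pi> (i + 1)} = {0..<int n} \<inter> {i. \<pi> (i + 1) < \<pi> i}"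
    by auto
  then show ?thesis
    unfolding des_def by simp
qed

lemma sum_signed_perms_inv: "(\<Sum>\<pi>\<in>signed_perms n. f (inv \<pi>)) = (\<Sum>\<pi>\<in>signed_perms n. f \<pi>)"
proof -
  have "bij_betw inv (signed_perms n) (signed_perms n)"
    by (rule bij_betw_byWitness[where f' = inv])
      (auto simp: inv_in_signed_perms inv_inv_eq signed_perms_bij)
  then show ?thesis
    by (rule sum.reindex_bij_betw)
qed

lemma bij_betw_comp_simple_refl:
  assumes "0 \<le> i" "i < int n"
  shows "bij_betw (\<lambda>\<pi>. \<pi> \<circ> simple_refl i) (signed_perms n) (signed_perms n)"
  by (rule bij_betw_byWitness[where f' = "\<lambda>\<pi>. \<pi> \<circ> simple_refl i"])
    (auto simp: comp_in_signed_perms simple_refl_in_signed_perms assms fun_eq_iff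
      simple_refl_involution)

lemma count_descent:
  assumes "0 \<le> i" "i < int n"
  shows "2 * (\<Sum>\<pi>\<in>signed_perms n. of_bool (\<pi> (i + 1) < \<pi> i) :: real) = card (signed_perms n)"
  by (rule sum_of_bool_flip[OF bij_betw_comp_simple_refl[OF assms]])
    (rule descent_comp_simple_refl[OF _ assms(1)])

lemma count_descent_pair:
  assumes "0 \<le> i" "i < int n" "0 \<le> j" "j < int n"
  shows "4 * (\<Sum>\<pi>\<in>signed_perms n. of_bool (\<pi> (i + 1) < \<pi> i \<and> inv \<pi> (j + 1) < inv \<pi> j) :: real)
    = card (signed_perms n) + (\<Sum>\<pi>\<in>signed_perms n. of_bool (adjacent_image i j \<pi>) :: real)"
proof -
  have "2 * (\<Sum>\<pi>\<in>signed_perms n. of_bool (inv \<pi> (j + 1) < inv \<pi> j) :: real) = card (signed_perms n)"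
    using count_descent[OF assms(3,4)]
      sum_signed_perms_inv[where f = "\<lambda>\<pi>. of_bool (\<pi> (j + 1) < \<pi> j) :: real"] by simp
  moreover have "4 * (\<Sum>\<pi>\<in>signed_perms n. of_bool (\<pi> (i + 1) < \<pi> i \<and> inv \<pi> (j + 1) < inv \<pi> j) :: real)
    = 2 * (\<Sum>\<pi>\<in>signed_perms n. of_bool (inv \<pi> (j + 1) < inv \<pi> j))
      + (\<Sum>\<pi>\<in>signed_perms n. of_bool (adjacent_image i j \<pi>))"
  proof (rule sum_of_bool_conj_flip[OF bij_betw_comp_simple_refl[OF assms(1,2)]])
    fix \<pi> assume \<pi>: "\<pi> \<in> signed_perms n"
    show "(\<pi> \<circ> simple_refl i) (i + 1) < (\<pi> \<circ> simple_refl i) i \<longleftrightarrow> \<not> \<pi> (i + 1) < \<pi> i"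
      by (rule descent_comp_simple_refl[OF \<pi> assms(1)])
    show "inv (\<pi> \<circ> simple_refl i) (j + 1) < inv (\<pi> \<circ> simple_refl i) j \<longleftrightarrow>
        (inv \<pi> (j + 1) < inv \<pi> j \<longleftrightarrow> \<not> adjacent_image i j \<pi>)"
      by (rule inv_descent_comp_simple_refl[OF \<pi> assms(1,2)])
    show "adjacent_image i j \<pi> \<Longrightarrow> inv \<pi> (j + 1) < inv \<pi> j \<longleftrightarrow> \<pi> (i + 1) < \<pi> i"
      by (rule adjacent_image_descent_iff[OF \<pi>])
    show "adjacent_image i j (\<pi> \<circ> simple_refl i) \<longleftrightarrow> adjacent_image i j \<pi>"
      by (rule adjacent_image_comp_simple_refl[OF \<pi> assms(1)])
  qed
  ultimately show ?thesis
    by simp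
qed

section \<open>Uniform distribution of values\<close>

definition signed_letters :: "nat \<Rightarrow> int set" where
  "signed_letters n = {x. x \<noteq> 0 \<and> \<bar>x\<bar> \<le> int n}"

lemma finite_signed_letters: "finite (signed_letters n)"
  by (rule finite_subset[of _ "{- int n..int n}"]) (auto simp: signed_letters_def)

lemma card_signed_letters: "card (signed_letters n) = 2 * n"
proof -
  have "signed_letters n = {- int n..-1} \<union> {1..int n}"
    by (auto simp: signed_letters_def)
  moreover have "card ({- int n..-1} \<union> {1..int n}) = n + n"
    by (subst card_Un_disjoint) auto
  ultimately show ?thesis
    by simp
qed

lemma signed_perms_signed_letters:
  "\<pi> \<in> signed_perms n \<Longrightarrow> x \<in> signed_letters n \<Longrightarrow> \<pi> x \<in> signed_letters n"
  unfolding signed_letters_def using signed_perms_abs_le signed_perms_eq_zero_iff by blast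

lemma card_signed_perms_left_comp:
  assumes "\<tau> \<in> signed_perms n" "\<tau>' \<in> signed_perms n" "\<And>x. \<tau>' (\<tau> x) = x" "\<And>x. \<tau> (\<tau>' x) = x"
    and "\<And>\<pi>. \<pi> \<in> signed_perms n \<Longrightarrow> Q (\<tau> \<circ> \<pi>) \<longleftrightarrow> P \<pi>"
  shows "card {\<pi> \<in> signed_perms n. P \<pi>} = card {\<pi> \<in> signed_perms n. Q \<pi>}"
proof (rule bij_betw_same_card[of "\<lambda>\<pi>. \<tau> \<circ> \<pi>"], rule bij_betw_byWitness[where f' = "\<lambda>\<pi>. \<tau>' \<circ> \<pi>"])
  have left_inv: "\<tau>' \<circ> (\<tau> \<circ> \<pi>) = \<pi>" and right_inv: "\<tau> \<circ> (\<tau>' \<circ> \<pi>) = \<pi>" for \<pi>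
    using assms(3,4) by (simp_all add: fun_eq_iff)
  then show "\<forall>\<pi>\<in>{\<pi> \<in> signed_perms n. P \<pi>}. \<tau>' \<circ> (\<tau> \<circ> \<pi>) = \<pi>"
    and "\<forall>\<pi>\<in>{\<pi> \<in> signed_perms n. Q \<pi>}. \<tau> \<circ> (\<tau>' \<circ> \<pi>) = \<pi>"
    by blast+
  show "(\<circ>) \<tau> ` {\<pi> \<in> signed_perms n. P \<pi>} \<subseteq> {\<pi> \<in> signed_perms n. Q \<pi>}"
    using assms(5) comp_in_signed_perms[OF assms(1)] by auto
  show "(\<circ>) \<tau>' ` {\<pi> \<in> signed_perms n. Q \<pi>} \<subseteq> {\<pi> \<in> signed_perms n. P \<pi>}"
    using assms(5)[OF comp_in_signed_perms[OF assms(2)]] comp_in_signed_perms[OF assms(2)]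
    by (auto simp: right_inv)
qed

lemma card_signed_perms_value_eq:
  assumes "v \<in> signed_letters n" "v' \<in> signed_letters n"
  shows "card {\<pi> \<in> signed_perms n. \<pi> p = v} = card {\<pi> \<in> signed_perms n. \<pi> p = v'}"
proof -
  let ?\<tau> = "signed_transp v v'"
  have \<tau>: "?\<tau> \<in> signed_perms n" "?\<tau> (?\<tau> x) = x" for x
    using assms by (auto intro!: signed_transp_in_signed_perms signed_transp_involution
        simp: signed_letters_def)
  have \<tau>_v: "?\<tau> v = v'"
    using assms by (simp add: signed_letters_def signed_transp_def)
  show ?thesis
  proof (rule card_signed_perms_left_comp[of ?\<tau> n ?\<tau>])
    fix \<pi>
    show "(?\<tau> \<circ> \<pi>) p = v' \<longleftrightarrow> \<pi> p = v"
      using \<tau>(2)[of "\<pi> p"] \<tau>(2)[of v] \<tau>_v by auto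
  qed (use \<tau> in auto)
qed

lemma card_signed_perms_values_eq:
  assumes "v \<in> signed_letters n" "w \<in> signed_letters n" "\<bar>v\<bar> \<noteq> \<bar>w\<bar>"
    and "v' \<in> signed_letters n" "w' \<in> signed_letters n" "\<bar>v'\<bar> \<noteq> \<bar>w'\<bar>"
  shows "card {\<pi> \<in> signed_perms n. \<pi> p = v \<and> \<pi> q = w} = card {\<pi> \<in> signed_perms n. \<pi> p = v' \<and> \<pi> q = w'}"
proof -
  let ?\<tau>\<^sub>1 = "signed_transp v v'"
  define u where "u = ?\<tau>\<^sub>1 w"
  let ?\<tau>\<^sub>2 = "signed_transp u w'"
  have nonzero: "v \<noteq> 0" "w \<noteq> 0" "v' \<noteq> 0" "w' \<noteq> 0"
    using assms by (auto simp: signed_letters_def)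
  have \<tau>\<^sub>1: "?\<tau>\<^sub>1 \<in> signed_perms n" "?\<tau>\<^sub>1 (?\<tau>\<^sub>1 x) = x" for x
    using assms by (auto intro!: signed_transp_in_signed_perms signed_transp_involution
        simp: signed_letters_def)
  have u: "u \<in> signed_letters n" "\<bar>u\<bar> \<noteq> \<bar>v'\<bar>"
    using signed_perms_signed_letters[OF \<tau>\<^sub>1(1) assms(2)] assms(3) nonzero
    by (auto simp: u_def signed_transp_def)
  have \<tau>\<^sub>2: "?\<tau>\<^sub>2 \<in> signed_perms n" "?\<tau>\<^sub>2 (?\<tau>\<^sub>2 x) = x" for x
    using assms u by (auto intro!: signed_transp_in_signed_perms signed_transp_involution
        simp: signed_letters_def)
  let ?\<tau> = "?\<tau>\<^sub>2 \<circ> ?\<tau>\<^sub>1" and ?\<tau>' = "?\<tau>\<^sub>1 \<circ> ?\<tau>\<^sub>2"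
  have \<tau>_v: "?\<tau> v = v'"
    using u(2) assms(6) nonzero by (auto simp: signed_transp_def)
  have \<tau>_w: "?\<tau> w = w'"
    using u by (auto simp: u_def signed_transp_def signed_letters_def)
  have \<tau>_inj: "?\<tau> x = ?\<tau> y \<longleftrightarrow> x = y" for x y
    by (metis \<tau>\<^sub>1(2) \<tau>\<^sub>2(2) comp_apply)
  show ?thesis
  proof (rule card_signed_perms_left_comp[of ?\<tau> n ?\<tau>'])
    fix \<pi>
    show "(?\<tau> \<circ> \<pi>) p = v' \<and> (?\<tau> \<circ> \<pi>) q = w' \<longleftrightarrow> \<pi> p = v \<and> \<pi> q = w"
      using \<tau>_inj[of "\<pi> p" v] \<tau>_inj[of "\<pi> q" w] \<tau>_v \<tau>_w by (simp only: o_apply)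
  qed (auto simp: comp_in_signed_perms \<tau>\<^sub>1 \<tau>\<^sub>2)
qed

lemma card_eq_card_mult_fibre:
  assumes "finite A" "finite B" "f ` A \<subseteq> B" "\<And>y. y \<in> B \<Longrightarrow> card {x \<in> A. f x = y} = c"
  shows "card A = card B * c"
proof -
  have "card A = (\<Sum>y\<in>B. card {x \<in> A. f x = y})"
    using sum.group[OF assms(1-3), of "\<lambda>_. 1 :: nat"] by simp
  then show ?thesis
    using assms(4) by simp
qed

lemma card_signed_perms_value:
  assumes "p \<in> signed_letters n" "v \<in> signed_letters n"
  shows "card (signed_perms n) = 2 * n * card {\<pi> \<in> signed_perms n. \<pi> p = v}"
proof -
  have "card (signed_perms n) = card (signed_letters n) * card {\<pi> \<in> signed_perms n. \<pi> p = v}"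
  proof (rule card_eq_card_mult_fibre[OF finite_signed_perms finite_signed_letters])
    show "(\<lambda>\<pi>. \<pi> p) ` signed_perms n \<subseteq> signed_letters n"
      using signed_perms_signed_letters assms(1) by blast
  qed (rule card_signed_perms_value_eq[OF _ assms(2)])
  then show ?thesis
    by (simp add: card_signed_letters)
qed

lemma card_signed_perms_values:
  assumes "p \<in> signed_letters n" "q \<in> signed_letters n" "\<bar>p\<bar> \<noteq> \<bar>q\<bar>"
    and "v \<in> signed_letters n" "w \<in> signed_letters n" "\<bar>v\<bar> \<noteq> \<bar>w\<bar>"
  shows "card (signed_perms n) = 2 * n * (2 * n - 2) * card {\<pi> \<in> signed_perms n. \<pi> p = v \<and> \<pi> q = w}"
proof -
  let ?L = "signed_letters n"
  let ?pairs = "SIGMA x:?L. ?L - {x, - x}"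
  have image: "(\<lambda>\<pi>. (\<pi> p, \<pi> q)) ` signed_perms n \<subseteq> ?pairs"
  proof (rule image_subsetI)
    fix \<pi> assume \<pi>: "\<pi> \<in> signed_perms n"
    have "\<pi> q \<noteq> \<pi> p" "\<pi> q \<noteq> - \<pi> p"
      using assms(3) signed_perms_inj_eq[OF \<pi>] signed_perms_odd[OF \<pi>, symmetric] by auto
    then show "(\<pi> p, \<pi> q) \<in> ?pairs"
      using signed_perms_signed_letters[OF \<pi>] assms(1,2) by auto
  qed
  have fibre: "card {\<pi> \<in> signed_perms n. (\<pi> p, \<pi> q) = y} = card {\<pi> \<in> signed_perms n. \<pi> p = v \<and> \<pi> q = w}"
    if y: "y \<in> ?pairs" for y
  proof -
    obtain x z where "y = (x, z)" "x \<in> ?L" "z \<in> ?L" "z \<noteq> x" "z \<noteq> - x"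
      using y by auto
    moreover have "\<bar>x\<bar> \<noteq> \<bar>z\<bar>"
      using \<open>z \<noteq> x\<close> \<open>z \<noteq> - x\<close> by arith
    ultimately show ?thesis
      using card_signed_perms_values_eq[of x n z v w] assms(4-6) by simp
  qed
  have card_pairs: "card ?pairs = 2 * n * (2 * n - 2)"
  proof -
    have "card (?L - {x, - x}) = 2 * n - 2" if "x \<in> ?L" for x
      using that card_signed_letters
      by (subst card_Diff_subset) (auto simp: signed_letters_def)
    then show ?thesis
      using finite_signed_letters card_signed_letters by (simp add: card_SigmaI)
  qed
  have "finite ?pairs"
    using finite_signed_letters by blast
  from card_eq_card_mult_fibre[OF finite_signed_perms this image fibre] show ?thesis
    unfolding card_pairs .
qed

section \<open>Moments of descents and inverse descents\<close>

lemma adjacent_image_0_0_iff: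
  "\<pi> \<in> signed_perms n \<Longrightarrow> adjacent_image 0 0 \<pi> \<longleftrightarrow> \<pi> 1 = 1 \<or> \<pi> 1 = - 1"
  by (auto simp: adjacent_image_def doubleton_eq_iff signed_perms_zero)

lemma adjacent_image_zero_iff:
  assumes "\<pi> \<in> signed_perms n" "0 \<le> i" "0 \<le> j" "adjacent_image i j \<pi>"
  shows "i = 0 \<longleftrightarrow> j = 0"
  using assms signed_perms_eq_zero_iff[OF assms(1), of i] signed_perms_eq_zero_iff[OF assms(1), of "i + 1"]
  by (auto simp: adjacent_image_def doubleton_eq_iff)

lemma count_adjacent_image_0_0:
  assumes "n \<ge> 1"
  shows "real n * (\<Sum>\<pi>\<in>signed_perms n. of_bool (adjacent_image 0 0 \<pi>)) = card (signed_perms n)"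
proof -
  let ?S = "signed_perms n"
  have letters: "1 \<in> signed_letters n" "- 1 \<in> signed_letters n"
    using assms by (auto simp: signed_letters_def)
  have "(\<Sum>\<pi>\<in>?S. of_bool (adjacent_image 0 0 \<pi>) :: real)
      = (\<Sum>\<pi>\<in>?S. of_bool (\<pi> 1 = 1) + of_bool (\<pi> 1 = - 1))"
    by (rule sum.cong) (auto simp: adjacent_image_0_0_iff)
  also have "\<dots> = card {\<pi> \<in> ?S. \<pi> 1 = 1} + card {\<pi> \<in> ?S. \<pi> 1 = - 1}"
    by (simp add: sum.distrib finite_signed_perms Collect_conj_eq Int_commute)
  also have "\<dots> = 2 * card {\<pi> \<in> ?S. \<pi> 1 = 1}"
    using card_signed_perms_value_eq[OF letters, where p = 1] by simp
  finally show ?thesis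
    using card_signed_perms_value[OF letters(1) letters(1)] by simp
qed

lemma count_adjacent_image:
  assumes "1 \<le> i" "i < int n" "1 \<le> j" "j < int n"
  shows "real n * real (n - 1) * (\<Sum>\<pi>\<in>signed_perms n. of_bool (adjacent_image i j \<pi>)) = card (signed_perms n)"
proof -
  let ?S = "signed_perms n"
  let ?c = "\<lambda>v w. card {\<pi> \<in> ?S. \<pi> i = v \<and> \<pi> (i + 1) = w}"
  have letters: "i \<in> signed_letters n" "i + 1 \<in> signed_letters n"
    "j \<in> signed_letters n" "j + 1 \<in> signed_letters n" "- j \<in> signed_letters n" "- (j + 1) \<in> signed_letters n"
    using assms by (auto simp: signed_letters_def)
  have "\<bar>i\<bar> \<noteq> \<bar>i + 1\<bar>" "\<bar>j\<bar> \<noteq> \<bar>j + 1\<bar>"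
    using assms by simp_all
  note abs_ne = this
  have same_count: "?c v w = ?c j (j + 1)"
    if "v \<in> signed_letters n" "w \<in> signed_letters n" "\<bar>v\<bar> \<noteq> \<bar>w\<bar>" for v w
    by (rule card_signed_perms_values_eq[OF that letters(3,4) abs_ne(2)])
  have "(\<Sum>\<pi>\<in>?S. of_bool (adjacent_image i j \<pi>) :: real)
      = (\<Sum>\<pi>\<in>?S. of_bool (\<pi> i = j \<and> \<pi> (i + 1) = j + 1) + of_bool (\<pi> i = j + 1 \<and> \<pi> (i + 1) = j)
          + of_bool (\<pi> i = - j \<and> \<pi> (i + 1) = - (j + 1)) + of_bool (\<pi> i = - (j + 1) \<and> \<pi> (i + 1) = - j))"
    by (rule sum.cong) (use assms in \<open>auto simp: adjacent_image_def doubleton_eq_iff\<close>)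
  also have "\<dots> = ?c j (j + 1) + ?c (j + 1) j + ?c (- j) (- (j + 1)) + ?c (- (j + 1)) (- j)"
    by (simp only: sum.distrib sum_of_bool_eq finite_signed_perms Collect_conj_eq Collect_mem_eq
        of_nat_add)
  also have "\<dots> = 4 * ?c j (j + 1)"
    using same_count[OF letters(4,3)] same_count[OF letters(5,6)] same_count[OF letters(6,5)] abs_ne(2)
    by simp
  finally show ?thesis
    using card_signed_perms_values[OF letters(1,2) abs_ne(1) letters(3,4) abs_ne(2)] assms
    by (simp add: of_nat_diff)
qed

lemma sum_count_adjacent_image:
  assumes "n \<ge> 1"
  shows "(\<Sum>i\<in>{0..<int n}. \<Sum>j\<in>{0..<int n}. \<Sum>\<pi>\<in>signed_perms n. of_bool (adjacent_image i j \<pi>) :: real)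
    = card (signed_perms n)"
proof -
  let ?S = "signed_perms n" and ?N = "real (card (signed_perms n))"
  let ?count = "\<lambda>i j. \<Sum>\<pi>\<in>?S. of_bool (adjacent_image i j \<pi>) :: real"
  have I: "{0..<int n} = insert 0 {1..<int n}"
    using assms by auto
  have vanish: "?count i j = 0" if "0 \<le> i" "0 \<le> j" "i = 0 \<longleftrightarrow> j \<noteq> 0" for i j
    using adjacent_image_zero_iff that by (intro sum.neutral) auto
  have row: "(\<Sum>j\<in>{0..<int n}. ?count i j) = ?N / n" if "i \<in> {0..<int n}" for i
  proof (cases "i = 0")
    case True
    then have "(\<Sum>j\<in>{0..<int n}. ?count i j) = ?count 0 0"
      unfolding I using vanish by simp
    then show ?thesis
      using count_adjacent_image_0_0[OF assms] assms by (simp add: field_simps)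
  next
    case False
    then have n: "n \<ge> 2"
      using that by auto
    have "(\<Sum>j\<in>{0..<int n}. ?count i j) = (\<Sum>j\<in>{1..<int n}. ?count i j)"
      unfolding I using False that vanish by simp
    also have "\<dots> = (\<Sum>j\<in>{1..<int n}. ?N / (n * (n - 1)))"
    proof (rule sum.cong)
      fix j assume "j \<in> {1..<int n}"
      then show "?count i j = ?N / (n * (n - 1))"
        using count_adjacent_image[of i n j] False that n by (simp add: field_simps)
    qed simp
    also have "\<dots> = ?N / n"
      using n by (simp add: of_nat_diff field_simps)
    finally show ?thesis .
  qed
  show ?thesis
    using assms by (simp add: row)
qed

lemma sum_des:
  "2 * (\<Sum>\<pi>\<in>signed_perms n. real (des n \<pi>)) = n * card (signed_perms n)"
proof -
  have "2 * (\<Sum>\<pi>\<in>signed_perms n. real (des n \<pi>))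
      = (\<Sum>i\<in>{0..<int n}. 2 * (\<Sum>\<pi>\<in>signed_perms n. of_bool (\<pi> (i + 1) < \<pi> i)))"
    unfolding des_eq_sum by (subst sum.swap) (simp add: sum_distrib_left)
  also have "\<dots> = (\<Sum>i\<in>{0..<int n}. real (card (signed_perms n)))"
    using count_descent by (intro sum.cong) auto
  finally show ?thesis
    by simp
qed

lemma sum_ides_eq_sum_des:
  "(\<Sum>\<pi>\<in>signed_perms n. f (ides n \<pi>)) = (\<Sum>\<pi>\<in>signed_perms n. f (des n \<pi>))"
  unfolding ides_def by (rule sum_signed_perms_inv)

lemma sum_des_mult_ides:
  assumes "n \<ge> 1"
  shows "4 * (\<Sum>\<pi>\<in>signed_perms n. real (des n \<pi>) * real (ides n \<pi>))
    = (real n ^ 2 + 1) * card (signed_perms n)"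
proof -
  let ?S = "signed_perms n" and ?I = "{0..<int n}"
  have "real (des n \<pi>) * real (ides n \<pi>)
      = (\<Sum>i\<in>?I. \<Sum>j\<in>?I. of_bool (\<pi> (i + 1) < \<pi> i \<and> inv \<pi> (j + 1) < inv \<pi> j))" for \<pi>
    by (simp only: ides_def des_eq_sum sum_product of_bool_conj)
  then have "4 * (\<Sum>\<pi>\<in>?S. real (des n \<pi>) * real (ides n \<pi>))
      = (\<Sum>i\<in>?I. \<Sum>j\<in>?I. 4 * (\<Sum>\<pi>\<in>?S. of_bool (\<pi> (i + 1) < \<pi> i \<and> inv \<pi> (j + 1) < inv \<pi> j)))"
    by (simp only: sum.swap[where A = ?S] sum_distrib_left)
  also have "\<dots> = (\<Sum>i\<in>?I. \<Sum>j\<in>?I. card ?S + (\<Sum>\<pi>\<in>?S. of_bool (adjacent_image i j \<pi>) :: real))"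
    using count_descent_pair by (intro sum.cong) auto
  also have "\<dots> = real n * real n * card ?S + card ?S"
    using sum_count_adjacent_image[OF assms] by (simp add: sum.distrib)
  finally show ?thesis
    by (simp add: power2_eq_square algebra_simps)
qed

lemma variance_pmf_of_set:
  fixes f :: "'a \<Rightarrow> real"
  assumes "finite S" "S \<noteq> {}"
  shows "measure_pmf.variance (pmf_of_set S) f = (\<Sum>x\<in>S. f x ^ 2) / card S - ((\<Sum>x\<in>S. f x) / card S) ^ 2"
  using assms
  by (subst measure_pmf.variance_eq) (auto simp: integrable_measure_pmf_finite integral_pmf_of_set)

theorem proposition5p7:
  fixes n :: nat
  assumes "n \<ge> 1"
  shows "measure_pmf.expectation (pmf_of_set (signed_perms n)) (\<lambda>\<pi>. real (des n \<pi> + ides n \<pi>)) = real n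
    \<and> measure_pmf.variance (pmf_of_set (signed_perms n)) (\<lambda>\<pi>. real (des n \<pi> + ides n \<pi>))
      = 2 * measure_pmf.variance (pmf_of_set (signed_perms n)) (\<lambda>\<pi>. real (des n \<pi>)) + 1 / 2"
proof -
  let ?S = "signed_perms n" and ?D = "\<lambda>\<pi>. real (des n \<pi>)" and ?I = "\<lambda>\<pi>. real (ides n \<pi>)"
  have S: "finite ?S" "?S \<noteq> {}" "card ?S > 0"
    using finite_signed_perms id_in_signed_perms by (auto simp: card_gt_0_iff)
  have sum_D: "(\<Sum>\<pi>\<in>?S. ?D \<pi>) = n * card ?S / 2"
    using sum_des[of n] by simp
  have "(\<Sum>\<pi>\<in>?S. ?D \<pi> + ?I \<pi>) = 2 * (\<Sum>\<pi>\<in>?S. ?D \<pi>)"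
    using sum_ides_eq_sum_des[of real n] by (simp add: sum.distrib)
  moreover have "(\<Sum>\<pi>\<in>?S. (?D \<pi> + ?I \<pi>) ^ 2)
      = 2 * (\<Sum>\<pi>\<in>?S. ?D \<pi> ^ 2) + 2 * (\<Sum>\<pi>\<in>?S. ?D \<pi> * ?I \<pi>)"
    using sum_ides_eq_sum_des[of "\<lambda>k. real k ^ 2" n]
    by (simp add: power2_sum sum.distrib sum_distrib_left mult.assoc)
  ultimately show ?thesis
    unfolding variance_pmf_of_set[OF S(1,2)]
    unfolding integral_pmf_of_set[OF S(2,1)] of_nat_add sum_D
    using sum_des_mult_ides[OF assms] S(3) by (simp add: field_simps power2_eq_square)
qed

end
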